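(* Let $p\geq2$, $n_1,\dots,n_l\geq1$ be integers with $\sum_j p^{-n_j}=1$ and let $T_p$ be the map satisfying Condition 1 with slopes $\Lambda_j=p^{n_j}$. Let $U$ be a quantization of $T_p$ acting on $\mathcal H_\Bbbk\cong\mathbb C^{N_\Bbbk}$ with $N_\Bbbk=p^\Bbbk$ (with respect to the partition of $[0,1]$ into $p^\Bbbk$ equal intervals), and set $n_{\mathrm E}=\lfloor\log N_\Bbbk/\log\Lambda_{\max}\rfloor$, $\Lambda_{\max}=\max_j\Lambda_j$. Then for every base-$p$ cylinder $[\![\mathrm x]\!]$ of length $|\mathrm x|=m$, $$U^{-n}P_{[\![\mathrm x]\!]}U^n=P_{T_p^{-n}[\![\mathrm x]\!]}\qquad\text{for all } n \text{ with } n+m\leq n_{\mathrm E}.$$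
   Context: Condition 1: $[0,1]$ is divided into consecutive intervals $I_1,\dots,I_l$ with $|I_j|=\Lambda_j^{-1}$, and $T_p$ is affine with slope $\Lambda_j$ on $I_j$ mapping $I_j$ onto $[0,1]$ (so $T_p(x)=p^{n_j}x\bmod 1$ on $I_j$). For a word $\mathrm x=\mathrm x_1\dots\mathrm x_m$ over $\{0,\dots,p-1\}$, $[\![\mathrm x]\!]$ is the interval of points whose first $m$ base-$p$ digits are $\mathrm x_1,\dots,\mathrm x_m$. Let $E_i=[(i-1)p^{-\Bbbk},ip^{-\Bbbk}]$; with $B(i,j)=|E_i\cap T_p^{-1}E_j|/|E_i|$, a quantization is a unitary matrix $U$ with $B(j,i)=|U(i,j)|^2$ for all $i,j$. For a finite union $Y$ of intervals $E_i$, $P_Y$ is the diagonal matrix with entry $1$ at $i$ if $E_i\subseteq Y$ and $0$ otherwise (i.e. $P_Y=\mathrm{Op}(\chi_Y)$, the diagonal matrix of averages of $\chi_Y$ over the $E_i$). *)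

theory Defs
  imports "HOL-Analysis.Analysis" "Jordan_Normal_Form.Matrix"
begin

definition left_end :: "nat \<Rightarrow> nat list \<Rightarrow> nat \<Rightarrow> real" where
  "left_end p ns j = (\<Sum>i<j. 1 / real p ^ (ns ! i))"

definition condition1 :: "nat \<Rightarrow> nat list \<Rightarrow> (real \<Rightarrow> real) \<Rightarrow> bool" where
  "condition1 p ns T \<longleftrightarrow>
     (\<forall>j < length ns. \<forall>x. left_end p ns j < x \<and> x < left_end p ns (Suc j) \<longrightarrow>
        T x = real p ^ (ns ! j) * (x - left_end p ns j))"

(* E_i = [i/N, (i+1)/N], i = 0..N-1 (0-based version of the paper's E_i). *)
definition Eint :: "nat \<Rightarrow> nat \<Rightarrow> real set" where
  "Eint N i = {real i / real N .. (real i + 1) / real N}"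

definition preim :: "(real \<Rightarrow> real) \<Rightarrow> nat \<Rightarrow> real set \<Rightarrow> real set" where
  "preim T n Y = {x \<in> {0..1}. (T ^^ n) x \<in> Y}"

definition Bmat :: "(real \<Rightarrow> real) \<Rightarrow> nat \<Rightarrow> nat \<Rightarrow> nat \<Rightarrow> real" where
  "Bmat T N i j = measure lebesgue (Eint N i \<inter> preim T 1 (Eint N j)) / measure lebesgue (Eint N i)"

definition cadjoint :: "complex mat \<Rightarrow> complex mat" where
  "cadjoint A = mat (dim_col A) (dim_row A) (\<lambda>(i,j). cnj (A $$ (j,i)))"

definition unitary_mat :: "nat \<Rightarrow> complex mat \<Rightarrow> bool" where
  "unitary_mat N U \<longleftrightarrow> U \<in> carrier_mat N N \<and>
     cadjoint U * U = 1\<^sub>m N \<and> U * cadjoint U = 1\<^sub>m N"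

definition quantization :: "(real \<Rightarrow> real) \<Rightarrow> nat \<Rightarrow> complex mat \<Rightarrow> bool" where
  "quantization T N U \<longleftrightarrow> unitary_mat N U \<and>
     (\<forall>i<N. \<forall>j<N. Bmat T N j i = (cmod (U $$ (i,j)))\<^sup>2)"

definition mat_inv :: "nat \<Rightarrow> complex mat \<Rightarrow> complex mat" where
  "mat_inv N U = (THE V. V \<in> carrier_mat N N \<and> V * U = 1\<^sub>m N \<and> U * V = 1\<^sub>m N)"

definition mat_neg_pow :: "nat \<Rightarrow> complex mat \<Rightarrow> nat \<Rightarrow> complex mat" where
  "mat_neg_pow N U n = (mat_inv N U) ^\<^sub>m n"

(* P_Y = Op(chi_Y): diagonal matrix of averages of chi_Y over the E_i *)
definition Pop :: "nat \<Rightarrow> real set \<Rightarrow> complex mat" where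
  "Pop N Y = mat N N (\<lambda>(i,j). if i = j then
      complex_of_real (measure lebesgue (Eint N i \<inter> Y) / measure lebesgue (Eint N i)) else 0)"

definition cylinder :: "nat \<Rightarrow> nat list \<Rightarrow> real set" where
  "cylinder p xs = (let c = (\<Sum>k<length xs. real (xs ! k) / real p ^ (Suc k))
                    in {c .. c + 1 / real p ^ length xs})"

end

theory Submission
  imports Defs
begin

text \<open>
  Call a set adapted at level r if every open base-p interval (c/p^r, (c+1)/p^r) lies inside it
  or misses it; up to the null set of grid points it is then a union of such intervals.
  Because sum_j p^(-n_j) = 1, the endpoints of the branches I_j lie on the level-r grid once
  r >= max n_j, so T maps each level-r interval affinely into a level-(r - n_j) interval.
  Hence T^-1 turns sets adapted at level s into sets adapted at level s + max n_j, and
  T^-n [[x]] is adapted at level m + n max n_j <= k. For Z adapted at level k, P_Z is the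
  diagonal 0/1 matrix of the indicator of Z on the E_i. The quantization condition forces
  U(i,a) = 0 unless T maps E_a onto an interval containing E_i, so the indicator of Z at i
  equals that of T^-1 Z at a whenever U(i,a) is nonzero; together with U^* U = 1 this gives
  U^* P_Z U = P_(T^-1 Z), and induction on n concludes.
\<close>

section \<open>Unitary matrices\<close>

lemma cadjoint_carrier_mat: "U \<in> carrier_mat N M \<Longrightarrow> cadjoint U \<in> carrier_mat M N"
  unfolding cadjoint_def by auto

lemma cadjoint_index:
  "U \<in> carrier_mat N M \<Longrightarrow> i < M \<Longrightarrow> j < N \<Longrightarrow> cadjoint U $$ (i,j) = cnj (U $$ (j,i))"
  unfolding cadjoint_def by auto

lemma mat_inv_unitary:
  assumes "unitary_mat N U"
  shows "mat_inv N U = cadjoint U"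
  unfolding mat_inv_def
proof (rule the_equality)
  have U: "U \<in> carrier_mat N N" and UU: "cadjoint U * U = 1\<^sub>m N" "U * cadjoint U = 1\<^sub>m N"
    using assms unfolding unitary_mat_def by auto
  have C: "cadjoint U \<in> carrier_mat N N" using U by (rule cadjoint_carrier_mat)
  then show "cadjoint U \<in> carrier_mat N N \<and> cadjoint U * U = 1\<^sub>m N \<and> U * cadjoint U = 1\<^sub>m N"
    using UU by simp
  fix V assume "V \<in> carrier_mat N N \<and> V * U = 1\<^sub>m N \<and> U * V = 1\<^sub>m N"
  then have V: "V \<in> carrier_mat N N" "V * U = 1\<^sub>m N" by auto
  then have "V = V * (U * cadjoint U)" using UU by simp
  also have "\<dots> = (V * U) * cadjoint U" using assoc_mult_mat[OF V(1) U C] by simp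
  finally show "V = cadjoint U" using V C by simp
qed

lemma cadjoint_mult_diag_mult:
  fixes U :: "complex mat"
  assumes U: "U \<in> carrier_mat N N" "cadjoint U * U = 1\<^sub>m N"
    and de: "\<And>i a. i < N \<Longrightarrow> a < N \<Longrightarrow> U $$ (i,a) \<noteq> 0 \<Longrightarrow> d i = e a"
  shows "cadjoint U * mat N N (\<lambda>(i,j). if i = j then d i else 0) * U
           = mat N N (\<lambda>(i,j). if i = j then e i else 0)"
proof (rule eq_matI)
  let ?D = "mat N N (\<lambda>(i,j). if i = j then d i else 0)"
  have V: "cadjoint U \<in> carrier_mat N N" using U(1) by (rule cadjoint_carrier_mat)
  fix a b assume "a < dim_row (mat N N (\<lambda>(i,j). if i = j then e i else 0 :: complex))"
    "b < dim_col (mat N N (\<lambda>(i,j). if i = j then e i else 0 :: complex))"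
  then have a: "a < N" and b: "b < N" by auto
  have VD: "(cadjoint U * ?D) $$ (a,i) = cnj (U $$ (i,a)) * d i" if "i < N" for i
  proof -
    have "(cadjoint U * ?D) $$ (a,i) = (\<Sum>l<N. cadjoint U $$ (a,l) * ?D $$ (l,i))"
      using a that V by (simp add: scalar_prod_def lessThan_atLeast0)
    also have "\<dots> = (\<Sum>l<N. if l = i then cnj (U $$ (i,a)) * d i else 0)"
      by (rule sum.cong) (use a that U(1) in \<open>auto simp: cadjoint_index\<close>)
    finally show ?thesis using that by simp
  qed
  have "(cadjoint U * ?D * U) $$ (a,b) = (\<Sum>i<N. cnj (U $$ (i,a)) * d i * U $$ (i,b))"
    using a b V U(1) VD by (simp add: scalar_prod_def lessThan_atLeast0 del: assoc_mult_mat)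
  also have "\<dots> = (\<Sum>i<N. e a * (cadjoint U $$ (a,i) * U $$ (i,b)))"
    by (rule sum.cong) (use a U(1) de in \<open>auto simp: cadjoint_index\<close>)
  also have "\<dots> = e a * (cadjoint U * U) $$ (a,b)"
    using a b V U(1) by (simp add: scalar_prod_def sum_distrib_left lessThan_atLeast0)
  finally show "(cadjoint U * ?D * U) $$ (a,b)
                  = mat N N (\<lambda>(i,j). if i = j then e i else 0) $$ (a,b)"
    using a b U(2) by simp
qed (use U(1) in \<open>auto simp: cadjoint_def\<close>)

lemma pow_mat_Suc_left: "A \<in> carrier_mat N N \<Longrightarrow> A ^\<^sub>m Suc n = A * A ^\<^sub>m n"
proof (induction n)
  case (Suc n)
  then have "A ^\<^sub>m Suc (Suc n) = A * A ^\<^sub>m n * A" by simp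
  also have "\<dots> = A * A ^\<^sub>m Suc n"
    using Suc.prems by (simp add: assoc_mult_mat[of A N N "A ^\<^sub>m n" N A N])
  finally show ?case .
qed simp

lemma conj_pow_mat_Suc:
  assumes V: "V \<in> carrier_mat N N" and P: "P \<in> carrier_mat N N" and U: "U \<in> carrier_mat N N"
  shows "V ^\<^sub>m Suc n * P * U ^\<^sub>m Suc n = V * (V ^\<^sub>m n * P * U ^\<^sub>m n) * U"
proof -
  have "V ^\<^sub>m Suc n = V * V ^\<^sub>m n" "U ^\<^sub>m Suc n = U ^\<^sub>m n * U"
    using pow_mat_Suc_left[OF V] by simp_all
  then show ?thesis using V P U by (simp add: assoc_mult_mat[of _ N N _ N _ N] mult_carrier_mat[of _ N N])
qed

section \<open>Base-\<open>p\<close> intervals\<close>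

definition padic_ivl :: "nat \<Rightarrow> nat \<Rightarrow> nat \<Rightarrow> real set" where
  "padic_ivl p r c = {real c / real p ^ r <..< (real c + 1) / real p ^ r}"

definition adapted :: "nat \<Rightarrow> nat \<Rightarrow> real set \<Rightarrow> bool" where
  "adapted p r Z \<longleftrightarrow> (\<forall>c. padic_ivl p r c \<subseteq> Z \<or> padic_ivl p r c \<inter> Z = {})"

lemma mem_padic_ivl:
  "p > 0 \<Longrightarrow> x \<in> padic_ivl p r c \<longleftrightarrow> real c < x * real p ^ r \<and> x * real p ^ r < real c + 1"
  unfolding padic_ivl_def by (simp add: divide_less_eq less_divide_eq)

lemma mem_Eint_pow:
  "p > 0 \<Longrightarrow> x \<in> Eint (p ^ k) i \<longleftrightarrow> real i \<le> x * real p ^ k \<and> x * real p ^ k \<le> real i + 1"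
  unfolding Eint_def by (simp add: divide_le_eq le_divide_eq)

lemma padic_ivl_nonempty: "p > 0 \<Longrightarrow> padic_ivl p r c \<noteq> {}"
  unfolding padic_ivl_def by (simp add: divide_le_cancel)

lemma padic_ivl_subset_unit: "p > 0 \<Longrightarrow> c < p ^ r \<Longrightarrow> padic_ivl p r c \<subseteq> {0..1}"
proof
  fix x assume p: "p > 0" and c: "c < p ^ r" and x: "x \<in> padic_ivl p r c"
  have P: "real p ^ r > 0" using p by simp
  have "real c + 1 \<le> real p ^ r" using c by (metis Suc_leI of_nat_Suc of_nat_le_iff of_nat_power add.commute)
  then have "0 < x * real p ^ r" "x * real p ^ r < real p ^ r"
    using x unfolding mem_padic_ivl[OF p] by linarith+
  then show "x \<in> {0..1}" using P by (simp add: zero_less_mult_iff mult_less_cancel_right2)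
qed

lemma padic_ivl_disjoint_unit: "p > 0 \<Longrightarrow> p ^ r \<le> c \<Longrightarrow> padic_ivl p r c \<inter> {0..1} = {}"
proof -
  assume p: "p > 0" and c: "p ^ r \<le> c"
  have "real p ^ r \<le> real c" using c by (metis of_nat_le_iff of_nat_power)
  have "x * real p ^ r \<le> real c" if "x \<le> 1" for x
  proof -
    have "x * real p ^ r \<le> 1 * real p ^ r" using that by (intro mult_right_mono) auto
    then show ?thesis using \<open>real p ^ r \<le> real c\<close> by linarith
  qed
  then show ?thesis using p by (force simp: mem_padic_ivl)
qed

lemma padic_ivl_subset_coarser:
  assumes p: "p > 0" and rs: "r \<le> s"
  shows "padic_ivl p s c \<subseteq> padic_ivl p r (c div p ^ (s - r))"
proof
  fix x assume x: "x \<in> padic_ivl p s c"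
  define q where "q = p ^ (s - r)"
  define d where "d = c div q"
  have q: "q > 0" using p unfolding q_def by simp
  have ps: "x * real p ^ s = (x * real p ^ r) * real q"
    using rs unfolding q_def by (simp flip: power_add)
  have "d * q \<le> c" "c + 1 \<le> (d + 1) * q"
    using dividend_less_times_div[OF q, of c] unfolding d_def by (simp_all add: algebra_simps)
  then have "real (d * q) \<le> real c" "real (c + 1) \<le> real ((d + 1) * q)"
    by (simp_all only: of_nat_le_iff)
  then have "real d * real q \<le> real c" "real c + 1 \<le> (real d + 1) * real q"
    by (simp_all add: algebra_simps)
  then have "real d * real q < (x * real p ^ r) * real q" "(x * real p ^ r) * real q < (real d + 1) * real q"
    using x unfolding mem_padic_ivl[OF p] ps by linarith+
  then show "x \<in> padic_ivl p r (c div p ^ (s - r))"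
    using q unfolding mem_padic_ivl[OF p] d_def q_def[symmetric] by (simp add: mult_less_cancel_right_pos)
qed

lemma padic_ivl_subset_if_meets:
  assumes p: "p > 0" and sk: "s \<le> k" and y: "y \<in> Eint (p ^ k) i" "y \<in> padic_ivl p s c"
  shows "padic_ivl p k i \<subseteq> padic_ivl p s c"
proof
  fix x assume x: "x \<in> padic_ivl p k i"
  define q where "q = p ^ (k - s)"
  have q: "real q > 0" using p unfolding q_def by simp
  have pk: "z * real p ^ k = (z * real p ^ s) * real q" for z
    using sk unfolding q_def by (simp flip: power_add)
  have "real c * real q < (y * real p ^ s) * real q" "(y * real p ^ s) * real q < (real c + 1) * real q"
    using y(2) q unfolding mem_padic_ivl[OF p] by (simp_all add: mult_less_cancel_right_pos)
  then have "real c * real q < real i + 1" "real i < (real c + 1) * real q"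
    using y(1) unfolding mem_Eint_pow[OF p] pk by linarith+
  then have "real (c * q) < real (i + 1)" "real i < real ((c + 1) * q)"
    by (simp_all add: algebra_simps)
  then have "c * q \<le> i" "i + 1 \<le> (c + 1) * q"
    by (simp_all only: of_nat_less_iff)
  then have "real (c * q) \<le> real i" "real (i + 1) \<le> real ((c + 1) * q)"
    by (simp_all only: of_nat_le_iff)
  then have "real c * real q \<le> real i" "real i + 1 \<le> (real c + 1) * real q"
    by (simp_all add: algebra_simps)
  then have "real c * real q < (x * real p ^ s) * real q" "(x * real p ^ s) * real q < (real c + 1) * real q"
    using x unfolding mem_padic_ivl[OF p] pk by linarith+
  then show "x \<in> padic_ivl p s c"
    using q unfolding mem_padic_ivl[OF p] by (simp add: mult_less_cancel_right_pos)
qed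

lemma adapted_mono: "p > 0 \<Longrightarrow> r \<le> s \<Longrightarrow> adapted p r Z \<Longrightarrow> adapted p s Z"
  unfolding adapted_def by (meson padic_ivl_subset_coarser subset_trans disjoint_iff subsetD)

lemma adapted_unit_interval: "p > 0 \<Longrightarrow> adapted p r {0..1}"
  unfolding adapted_def using padic_ivl_subset_unit padic_ivl_disjoint_unit not_less by blast

lemma adapted_Int: "adapted p r A \<Longrightarrow> adapted p r B \<Longrightarrow> adapted p r (A \<inter> B)"
  unfolding adapted_def by blast

lemma cylinder_eq:
  fixes xs :: "nat list"
  assumes p: "p > 0"
  defines "C \<equiv> \<Sum>k<length xs. xs ! k * p ^ (length xs - Suc k)"
  shows "cylinder p xs = {real C / real p ^ length xs .. (real C + 1) / real p ^ length xs}"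
proof -
  let ?m = "length xs"
  have "(\<Sum>k<?m. real (xs ! k) / real p ^ Suc k) = (\<Sum>k<?m. real (xs ! k * p ^ (?m - Suc k)) / real p ^ ?m)"
  proof (rule sum.cong)
    fix k assume "k \<in> {..<?m}"
    then have "?m = Suc k + (?m - Suc k)" by simp
    then have "real p ^ ?m = real p ^ Suc k * real p ^ (?m - Suc k)" by (metis power_add)
    then show "real (xs ! k) / real p ^ Suc k = real (xs ! k * p ^ (?m - Suc k)) / real p ^ ?m"
      using p by (simp add: field_simps)
  qed simp
  also have "\<dots> = real C / real p ^ ?m" unfolding C_def by (simp add: sum_divide_distrib)
  finally show ?thesis unfolding cylinder_def Let_def by (simp add: add_divide_distrib)
qed

lemma adapted_cylinder:
  assumes p: "p > 0"
  shows "adapted p (length xs) (cylinder p xs)"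
  unfolding adapted_def
proof
  fix c
  let ?P = "real p ^ length xs"
  obtain C where cyl: "cylinder p xs = {real C / ?P .. (real C + 1) / ?P}"
    using cylinder_eq[OF p] by blast
  have cyl_iff: "x \<in> cylinder p xs \<longleftrightarrow> real C \<le> x * ?P \<and> x * ?P \<le> real C + 1" for x
    unfolding cyl using p by (simp add: divide_le_eq le_divide_eq)
  consider "c = C" | "c + 1 \<le> C" | "C + 1 \<le> c" by linarith
  then show "padic_ivl p (length xs) c \<subseteq> cylinder p xs \<or> padic_ivl p (length xs) c \<inter> cylinder p xs = {}"
  proof cases
    case 1
    then have "padic_ivl p (length xs) c \<subseteq> cylinder p xs"
      by (auto simp: cyl_iff mem_padic_ivl[OF p])
    then show ?thesis ..
  next
    case 2
    then have "real c + 1 \<le> real C" by linarith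
    then have "padic_ivl p (length xs) c \<inter> cylinder p xs = {}"
      by (auto simp: cyl_iff mem_padic_ivl[OF p])
    then show ?thesis ..
  next
    case 3
    then have "real C + 1 \<le> real c" by linarith
    then have "padic_ivl p (length xs) c \<inter> cylinder p xs = {}"
      by (auto simp: cyl_iff mem_padic_ivl[OF p])
    then show ?thesis ..
  qed
qed

section \<open>The expanding map on base-\<open>p\<close> intervals\<close>

lemma ex_index_between:
  fixes f :: "nat \<Rightarrow> 'a::linorder"
  assumes "f 0 \<le> c" "c < f n"
  shows "\<exists>j<n. f j \<le> c \<and> c < f (Suc j)"
  using assms
proof (induction n)
  case (Suc n)
  then show ?case by (cases "c < f n") (auto intro: less_SucI)
qed simp

lemma left_end_eq_sum:
  assumes p: "p > 0" and j: "j \<le> length ns" and r: "\<forall>i<length ns. ns ! i \<le> r"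
  shows "left_end p ns j = real (\<Sum>i<j. p ^ (r - ns ! i)) / real p ^ r"
proof -
  have "left_end p ns j = (\<Sum>i<j. real (p ^ (r - ns ! i)) / real p ^ r)"
    unfolding left_end_def
  proof (rule sum.cong)
    fix i assume "i \<in> {..<j}"
    then have "real p ^ r = real p ^ (ns ! i) * real p ^ (r - ns ! i)"
      using j r by (simp flip: power_add)
    then show "1 / real p ^ (ns ! i) = real (p ^ (r - ns ! i)) / real p ^ r"
      using p by simp
  qed simp
  then show ?thesis by (simp add: sum_divide_distrib)
qed

lemma affine_image_padic_ivl:
  assumes p: "p > 0" and x: "x \<in> padic_ivl p r c" and L: "L \<le> c" and q: "q \<le> r"
  shows "real p ^ q * (x - real L / real p ^ r) \<in> padic_ivl p (r - q) (c - L)"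
proof -
  have pr: "real p ^ r = real p ^ q * real p ^ (r - q)" using q by (simp flip: power_add)
  have "real p ^ q * (x - real L / real p ^ r) * real p ^ (r - q) = x * real p ^ r - real L"
    using p unfolding pr by (simp add: field_simps)
  then show ?thesis using x L unfolding mem_padic_ivl[OF p] by (simp add: of_nat_diff)
qed

lemma condition1_maps_padic_ivl:
  assumes p: "p > 0"
    and sum1: "(\<Sum>j<length ns. 1 / real p ^ (ns ! j)) = 1"
    and T: "condition1 p ns T" and r: "Max (set ns) \<le> r" and c: "c < p ^ r"
  shows "\<exists>s c'. r - Max (set ns) \<le> s \<and> s \<le> r \<and> c' < p ^ s \<and>
           (\<forall>x\<in>padic_ivl p r c. T x \<in> padic_ivl p s c')"
proof -
  define L where "L j = (\<Sum>i<j. p ^ (r - ns ! i))" for j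
  have nr: "\<forall>i<length ns. ns ! i \<le> r" using r by (meson Max_ge List.finite_set nth_mem order_trans)
  have LE: "left_end p ns j = real (L j) / real p ^ r" if "j \<le> length ns" for j
    unfolding L_def using left_end_eq_sum[OF p that nr] .
  have "real (L (length ns)) / real p ^ r = 1"
    using LE[of "length ns"] sum1 unfolding left_end_def by simp
  then have "L (length ns) = p ^ r" using p by (simp flip: of_nat_power)
  then obtain j where j: "j < length ns" and Lj: "L j \<le> c" "c < L (Suc j)"
    using ex_index_between[of L c "length ns"] c by (auto simp: L_def)
  have c': "c - L j < p ^ (r - ns ! j)" using Lj by (simp add: L_def)
  have "T x \<in> padic_ivl p (r - ns ! j) (c - L j)" if x: "x \<in> padic_ivl p r c" for x
  proof -
    have "real (L j) \<le> real c" "real c + 1 \<le> real (L (Suc j))" using Lj by simp_all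
    then have "real (L j) < x * real p ^ r" "x * real p ^ r < real (L (Suc j))"
      using x unfolding mem_padic_ivl[OF p] by linarith+
    then have "left_end p ns j < x" "x < left_end p ns (Suc j)"
      using p j by (simp_all add: LE divide_less_eq less_divide_eq)
    then have "T x = real p ^ (ns ! j) * (x - real (L j) / real p ^ r)"
      using T j x LE[of j] unfolding condition1_def by auto
    then show ?thesis using affine_image_padic_ivl[OF p x Lj(1)] nr j by simp
  qed
  moreover have "r - Max (set ns) \<le> r - ns ! j" using j by (simp add: diff_le_mono2)
  ultimately show ?thesis using c' nr j by (intro exI conjI) auto
qed

lemma mem_preim_Suc_iff:
  assumes "T x \<in> {0..1}"
  shows "x \<in> preim T (Suc n) Y \<longleftrightarrow> x \<in> {0..1} \<and> T x \<in> preim T n Y"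
  using assms unfolding preim_def by (simp add: funpow_Suc_right del: funpow.simps)

lemma preim_Suc_constant:
  assumes "\<forall>x\<in>A. x \<in> {0..1} \<and> T x \<in> B" "B \<subseteq> {0..1}"
    and "B \<subseteq> preim T n Y \<or> B \<inter> preim T n Y = {}" and "x \<in> A"
  shows "x \<in> preim T (Suc n) Y \<longleftrightarrow> B \<subseteq> preim T n Y"
  using assms mem_preim_Suc_iff[of T x n Y] by blast

lemma adapted_preim_Suc:
  assumes p: "p > 0" and sum1: "(\<Sum>j<length ns. 1 / real p ^ (ns ! j)) = 1"
    and T: "condition1 p ns T" and Z: "adapted p s (preim T n Y)" and r: "s + Max (set ns) \<le> r"
  shows "adapted p r (preim T (Suc n) Y)"
  unfolding adapted_def
proof
  fix c
  show "padic_ivl p r c \<subseteq> preim T (Suc n) Y \<or> padic_ivl p r c \<inter> preim T (Suc n) Y = {}"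
  proof (cases "c < p ^ r")
    case True
    have "Max (set ns) \<le> r" using r by simp
    from condition1_maps_padic_ivl[OF p sum1 T this True] obtain s' c' where
      "r - Max (set ns) \<le> s'" and c': "c' < p ^ s'"
      and Tx: "\<forall>x\<in>padic_ivl p r c. T x \<in> padic_ivl p s' c'"
      by blast
    then have s': "s \<le> s'" using r by linarith
    have "padic_ivl p s' c' \<subseteq> preim T n Y \<or> padic_ivl p s' c' \<inter> preim T n Y = {}"
      using adapted_mono[OF p s' Z] unfolding adapted_def by blast
    then show ?thesis
      using preim_Suc_constant[of "padic_ivl p r c" T "padic_ivl p s' c'" n Y] Tx
        padic_ivl_subset_unit[OF p True] padic_ivl_subset_unit[OF p c'] by blast
  next
    case False
    then have "padic_ivl p r c \<inter> {0..1} = {}" using padic_ivl_disjoint_unit[OF p] by simp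
    moreover have "preim T (Suc n) Y \<subseteq> {0..1}" unfolding preim_def by blast
    ultimately show ?thesis by blast
  qed
qed

lemma adapted_preim_cylinder:
  assumes "p > 0" "(\<Sum>j<length ns. 1 / real p ^ (ns ! j)) = 1" "condition1 p ns T"
  shows "adapted p (length xs + n * Max (set ns)) (preim T n (cylinder p xs))"
proof (induction n)
  case 0
  have "preim T 0 (cylinder p xs) = {0..1} \<inter> cylinder p xs" unfolding preim_def by auto
  then show ?case using adapted_Int adapted_unit_interval adapted_cylinder assms(1) by simp
next
  case (Suc n)
  then show ?case by (rule adapted_preim_Suc[OF assms]) simp
qed

section \<open>The operators \<open>P\<^sub>Y\<close>\<close>

lemma measure_Icc_Int_decided:
  fixes l u :: real
  assumes "l < u" and Z: "{l<..<u} \<subseteq> Z \<or> {l<..<u} \<inter> Z = {}"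
  shows "measure lebesgue ({l..u} \<inter> Z) = (if {l<..<u} \<subseteq> Z then u - l else 0)"
proof -
  let ?O = "if {l<..<u} \<subseteq> Z then {l<..<u} else {}"
  have interior: "x \<in> {l<..<u}" if "x \<in> {l..u}" "x \<notin> {l, u}" for x
    using that by auto
  have split: "{l..u} \<inter> Z = ?O \<union> ({l..u} \<inter> Z \<inter> {l, u})"
  proof (cases "{l<..<u} \<subseteq> Z")
    case False
    then show ?thesis using Z interior by (simp only: if_False) blast
  qed auto
  have "{l..u} \<inter> Z \<inter> {l, u} \<in> null_sets lebesgue"
    by (rule null_sets_completionI, rule finite_imp_null_set_lborel) auto
  then have "measure lebesgue (?O \<union> ({l..u} \<inter> Z \<inter> {l, u})) = measure lebesgue ?O"
    by (intro measure_Un_null_set) auto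
  then have "measure lebesgue ({l..u} \<inter> Z) = measure lebesgue ?O"
    using arg_cong[OF split, of "measure lebesgue"] by simp
  then show ?thesis using assms(1) by (simp add: measure_completion)
qed

lemma Pop_adapted:
  assumes p: "p > 0" and Z: "adapted p k Z"
  shows "Pop (p ^ k) Z
           = mat (p ^ k) (p ^ k) (\<lambda>(i,j). if i = j then of_bool (padic_ivl p k i \<subseteq> Z) else 0)"
proof -
  have "measure lebesgue (Eint (p ^ k) i \<inter> Z) / measure lebesgue (Eint (p ^ k) i)
          = of_bool (padic_ivl p k i \<subseteq> Z)" for i
  proof -
    let ?l = "real i / real (p ^ k)" and ?u = "(real i + 1) / real (p ^ k)"
    have lu: "?l < ?u" using p by (simp add: divide_strict_right_mono)
    have "{?l<..<?u} \<subseteq> Z \<or> {?l<..<?u} \<inter> Z = {}"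
      using Z unfolding adapted_def padic_ivl_def by simp
    then show ?thesis using p lu measure_Icc_Int_decided[OF lu, of Z] unfolding Eint_def padic_ivl_def
      by (simp add: measure_completion)
  qed
  then show ?thesis unfolding Pop_def by (intro cong_mat) auto
qed

lemma Pop_Int_unit_interval:
  assumes "N > 0"
  shows "Pop N Y = Pop N ({0..1} \<inter> Y)"
proof -
  have "Eint N i \<subseteq> {0..1}" if "i < N" for i
    using that assms unfolding Eint_def by (auto simp: divide_le_eq intro: order_trans[of _ "real i / real N"])
  then have "Eint N i \<inter> Y = Eint N i \<inter> ({0..1} \<inter> Y)" if "i < N" for i using that by blast
  then show ?thesis unfolding Pop_def by (intro cong_mat) auto
qed

lemma Bmat_nonzero_imp_hits:
  assumes "Bmat T (p ^ k) a i \<noteq> 0"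
  shows "\<exists>x\<in>padic_ivl p k a. T x \<in> Eint (p ^ k) i"
proof (rule ccontr)
  let ?l = "real a / real p ^ k" and ?u = "(real a + 1) / real p ^ k"
  assume "\<not> ?thesis"
  then have "Eint (p ^ k) a \<inter> preim T 1 (Eint (p ^ k) i) \<subseteq> {?l, ?u}"
    unfolding Eint_def padic_ivl_def preim_def by auto
  then have "finite (Eint (p ^ k) a \<inter> preim T 1 (Eint (p ^ k) i))" by (rule finite_subset) auto
  then have "Eint (p ^ k) a \<inter> preim T 1 (Eint (p ^ k) i) \<in> null_sets lebesgue"
    by (intro null_sets_completionI finite_imp_null_set_lborel)
  then show False using assms unfolding Bmat_def by (simp add: measure_eq_0_null_sets)
qed

lemma quantization_conj_Pop_preim:
  assumes p: "p > 0" and sum1: "(\<Sum>j<length ns. 1 / real p ^ (ns ! j)) = 1"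
    and T: "condition1 p ns T" and U: "quantization T (p ^ k) U"
    and Z: "adapted p s (preim T n Y)" and k: "s + Max (set ns) \<le> k"
  shows "cadjoint U * Pop (p ^ k) (preim T n Y) * U = Pop (p ^ k) (preim T (Suc n) Y)"
proof -
  let ?Z = "preim T n Y" and ?W = "preim T (Suc n) Y"
  have Zk: "adapted p k ?Z" using adapted_mono[OF p _ Z] k by simp
  have Wk: "adapted p k ?W" using adapted_preim_Suc[OF p sum1 T Z k] .
  have UC: "U \<in> carrier_mat (p ^ k) (p ^ k)" "cadjoint U * U = 1\<^sub>m (p ^ k)"
    using U unfolding quantization_def unitary_mat_def by auto
  have "of_bool (padic_ivl p k i \<subseteq> ?Z) = (of_bool (padic_ivl p k a \<subseteq> ?W) :: complex)"
    if i: "i < p ^ k" and a: "a < p ^ k" and Uia: "U $$ (i,a) \<noteq> 0" for i a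
  proof -
    have "Max (set ns) \<le> k" using k by simp
    from condition1_maps_padic_ivl[OF p sum1 T this a] obtain s' c' where
      "k - Max (set ns) \<le> s'" "s' \<le> k" "c' < p ^ s'"
      and Tx: "\<forall>x\<in>padic_ivl p k a. T x \<in> padic_ivl p s' c'"
      by blast
    then have s': "s \<le> s'" "s' \<le> k" "c' < p ^ s'" using k by linarith+
    let ?B = "padic_ivl p s' c'"
    have B: "?B \<subseteq> ?Z \<or> ?B \<inter> ?Z = {}"
      using adapted_mono[OF p s'(1) Z] unfolding adapted_def by blast
    have "Bmat T (p ^ k) a i \<noteq> 0" using U i a Uia unfolding quantization_def by simp
    then obtain x where x: "x \<in> padic_ivl p k a" "T x \<in> Eint (p ^ k) i"
      using Bmat_nonzero_imp_hits by blast
    have iB: "padic_ivl p k i \<subseteq> ?B"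
      using padic_ivl_subset_if_meets[OF p s'(2) x(2)] Tx x(1) by blast
    have "padic_ivl p k i \<subseteq> ?Z \<longleftrightarrow> ?B \<subseteq> ?Z"
      using B iB padic_ivl_nonempty[OF p, of k i] by blast
    moreover have "padic_ivl p k a \<subseteq> ?W \<longleftrightarrow> ?B \<subseteq> ?Z"
      using preim_Suc_constant[of "padic_ivl p k a" T ?B n Y] Tx B
        padic_ivl_subset_unit[OF p a] padic_ivl_subset_unit[OF p s'(3)]
        padic_ivl_nonempty[OF p, of k a] by blast
    ultimately show ?thesis by simp
  qed
  then show ?thesis
    unfolding Pop_adapted[OF p Zk] Pop_adapted[OF p Wk] by (intro cadjoint_mult_diag_mult[OF UC])
qed

lemma quantization_conj_pow_Pop_cylinder:
  assumes p: "p > 0" and sum1: "(\<Sum>j<length ns. 1 / real p ^ (ns ! j)) = 1"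
    and T: "condition1 p ns T" and U: "quantization T (p ^ k) U"
    and k: "length xs + n * Max (set ns) \<le> k"
  shows "cadjoint U ^\<^sub>m n * Pop (p ^ k) (cylinder p xs) * U ^\<^sub>m n = Pop (p ^ k) (preim T n (cylinder p xs))"
proof -
  have UC: "U \<in> carrier_mat (p ^ k) (p ^ k)" "cadjoint U \<in> carrier_mat (p ^ k) (p ^ k)"
    using U unfolding quantization_def unitary_mat_def by (auto simp: cadjoint_carrier_mat)
  have PC: "Pop (p ^ k) Z \<in> carrier_mat (p ^ k) (p ^ k)" for Z unfolding Pop_def by simp
  show ?thesis
    using k
  proof (induction n)
    case 0
    have "preim T 0 (cylinder p xs) = {0..1} \<inter> cylinder p xs" unfolding preim_def by auto
    then show ?case
      using UC PC[of "{0..1} \<inter> cylinder p xs"] Pop_Int_unit_interval[of "p ^ k" "cylinder p xs"] p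
      by simp
  next
    case (Suc n)
    have "cadjoint U ^\<^sub>m Suc n * Pop (p ^ k) (cylinder p xs) * U ^\<^sub>m Suc n
            = cadjoint U * Pop (p ^ k) (preim T n (cylinder p xs)) * U"
      unfolding conj_pow_mat_Suc[OF UC(2) PC UC(1)] using Suc by simp
    also have "\<dots> = Pop (p ^ k) (preim T (Suc n) (cylinder p xs))"
      using Suc.prems by (intro quantization_conj_Pop_preim[OF p sum1 T U
            adapted_preim_cylinder[OF p sum1 T, of xs n]]) simp
    finally show ?case .
  qed
qed

lemma nat_floor_ln_ratio:
  assumes p: "p \<ge> 2" and ne: "ns \<noteq> []" and pos: "1 \<le> Max (set ns)"
  shows "nat \<lfloor>ln (real (p ^ k)) / ln (Max {real p ^ (ns ! j) | j. j < length ns})\<rfloor> = k div Max (set ns)"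
proof -
  have "{real p ^ (ns ! j) | j. j < length ns} = (\<lambda>e. real p ^ e) ` set ns"
    by (auto simp: in_set_conv_nth intro!: imageI nth_mem)
  moreover have "mono (\<lambda>e::nat. real p ^ e)"
    using p by (intro monoI power_increasing) auto
  ultimately have "Max {real p ^ (ns ! j) | j. j < length ns} = real p ^ Max (set ns)"
    using ne by (simp add: mono_Max_commute)
  moreover have "ln (real p) > 0" using p by simp
  ultimately have "ln (real (p ^ k)) / ln (Max {real p ^ (ns ! j) | j. j < length ns})
                     = real k / real (Max (set ns))"
    using pos by (simp add: ln_realpow)
  then show ?thesis by (simp add: floor_divide_of_nat_eq)
qed

theorem corollary1:
  fixes p :: nat and ns :: "nat list" and T :: "real \<Rightarrow> real"
    and k :: nat and U :: "complex mat" and xs :: "nat list" and n :: nat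
  assumes "p \<ge> 2"
    and "ns \<noteq> []"
    and "\<forall>j < length ns. ns ! j \<ge> 1"
    and "(\<Sum>j<length ns. 1 / real p ^ (ns ! j)) = 1"
    and "condition1 p ns T"
    and "quantization T (p ^ k) U"
    and "\<forall>d \<in> set xs. d < p"
    and "n + length xs \<le>
           nat \<lfloor>ln (real (p ^ k)) / ln (Max {real p ^ (ns ! j) | j. j < length ns})\<rfloor>"
  shows "mat_neg_pow (p ^ k) U n * Pop (p ^ k) (cylinder p xs) * U ^\<^sub>m n
           = Pop (p ^ k) (preim T n (cylinder p xs))"
proof -
  let ?M = "Max (set ns)"
  have "ns ! 0 \<le> ?M" "1 \<le> ns ! 0" using assms(2,3) by simp_all
  then have M: "1 \<le> ?M" by linarith
  have "n + length xs \<le> k div ?M" using assms(8) nat_floor_ln_ratio[OF assms(1,2) M] by simp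
  then have "(n + length xs) * ?M \<le> k" using M by (simp add: less_eq_div_iff_mult_less_eq)
  moreover have "length xs + n * ?M \<le> (n + length xs) * ?M" using M by (simp add: algebra_simps)
  moreover have "mat_inv (p ^ k) U = cadjoint U"
    using assms(6) unfolding quantization_def by (simp add: mat_inv_unitary)
  ultimately show ?thesis
    unfolding mat_neg_pow_def
    using quantization_conj_pow_Pop_cylinder[OF _ assms(4,5,6)] assms(1) by simp
qed

end
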